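(* Let $A$ be a finite nonempty set. (a) For every $M\subseteq A^A$: $(\overline{M})^{*}=\mathrm{Pol}\,\mathrm{gQuord}\,M$. (b) For a monoid $M\le A^A$ the following are equivalent: (i) $M$ is u-closed; (i)$'$ $M^{*}$ is a clone; (i)$''$ $\Gamma_M\in\mathrm{gQuord}(A)$; (ii) $M=\mathrm{End}\,Q$ for some $Q\subseteq\mathrm{gQuord}(A)$; (iii) $M^{*}=\mathrm{Pol}\,Q$ for some $Q\subseteq\mathrm{gQuord}(A)$; moreover the same $Q$ can be taken in (ii) and (iii). (c) For $Q\subseteq\mathrm{Rel}(A)$ the following are equivalent: (i) $\mathrm{End}\,Q$ is u-closed; (i)$'$ $(\mathrm{End}\,Q)^{*}$ is a clone; (i)$''$ $\Gamma_{\mathrm{End}\,Q}\in\mathrm{gQuord}(A)$; (ii) there is $Q'\subseteq\mathrm{gQuord}(A)$ with $\mathrm{End}\,Q=\mathrm{End}\,Q'$; (ii)$'$ there is $Q'\subseteq\mathrm{gQuord}(A)$ with $[Q]_{\exists,\wedge,\vee,=}=[Q']_{\exists,\wedge,\vee,=}$; (iii) there is $Q'\subseteq\mathrm{gQuord}(A)$ with $(\mathrm{End}\,Q)^{*}=\mathrm{Pol}\,Q'$; moreover the same $Q'$ can be taken in (ii) and (iii), and instead of "there is $Q'\subseteq\mathrm{gQuord}(A)$" one may take "there is $\rho\in\mathrm{gQuord}(A)$" with $Q'=\{\rho\}$.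
   Context: $\mathrm{Rel}(A)$ is the set of all finitary relations on $A$. An operation preserves a relation if componentwise application to tuples of the relation gives a tuple of the relation; $\mathrm{Pol}\,Q$ (resp. $\mathrm{End}\,Q$) is the set of all finitary operations (resp. unary maps) preserving all relations of $Q$. A relation $\rho\subseteq A^m$ is a generalized quasiorder if it is reflexive and for every $m\times m$-matrix over $A$ whose rows and columns all belong to $\rho$, the diagonal belongs to $\rho$; $\mathrm{gQuord}(A)$ is the set of all of them, and for $M\subseteq A^A$, $\mathrm{gQuord}\,M$ is the set of those preserved by all maps in $M$. Writing $A=\{a_1,\dots,a_k\}$, $\Gamma_M:=\{(g a_1,\dots,g a_k)\mid g\in M\}$. A translation of an $n$-ary $f$ is a unary map $x\mapsto f(b_1,\dots,b_{i-1},x,b_{i+1},\dots,b_n)$ with fixed $b_j$; $\mathrm{trl}(f)$ is the set of translations ($\{f\}$ for unary $f$); $N^*:=\{f\mid\mathrm{trl}(f)\subseteq N\}$. The u-closure $\overline M$ is the intersection of all monoids $N$ with $M\subseteq N\le A^A$ such that $N^*$ is a clone; $M$ is u-closed if $\overline M=M$. $[Q]_{\exists,\wedge,\vee,=}$ denotes the set of all relations definable from relations in $Q$ by positive formulas (formulas built from relation symbols of $Q$ and equality using only $\exists,\wedge,\vee$). *)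

theory Defs
  imports Main "HOL-Library.FuncSet"
begin

definition tuples :: "'a set \<Rightarrow> nat \<Rightarrow> 'a list set" where
  "tuples A m = {xs. set xs \<subseteq> A \<and> length xs = m}"

definition Ops :: "'a set \<Rightarrow> (nat \<times> ('a list \<Rightarrow> 'a)) set" where
  "Ops A = {(n, f). 1 \<le> n \<and> (\<forall>xs\<in>tuples A n. f xs \<in> A)
                         \<and> (\<forall>xs. xs \<notin> tuples A n \<longrightarrow> f xs = undefined)}"

definition Rel :: "'a set \<Rightarrow> (nat \<times> 'a list set) set" where
  "Rel A = {(m, \<rho>). 1 \<le> m \<and> \<rho> \<subseteq> tuples A m}"

definition preserves :: "nat \<times> ('a list \<Rightarrow> 'a) \<Rightarrow> nat \<times> 'a list set \<Rightarrow> bool" where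
  "preserves F R = (case F of (n, f) \<Rightarrow> case R of (m, \<rho>) \<Rightarrow>
     (\<forall>rs. length rs = n \<and> set rs \<subseteq> \<rho> \<longrightarrow>
        map (\<lambda>i. f (map (\<lambda>r. r ! i) rs)) [0..<m] \<in> \<rho>))"

definition preserves_map :: "('a \<Rightarrow> 'a) \<Rightarrow> nat \<times> 'a list set \<Rightarrow> bool" where
  "preserves_map g R = (\<forall>r\<in>snd R. map g r \<in> snd R)"

definition Pol :: "'a set \<Rightarrow> (nat \<times> 'a list set) set \<Rightarrow> (nat \<times> ('a list \<Rightarrow> 'a)) set" where
  "Pol A Q = {F \<in> Ops A. \<forall>R\<in>Q. preserves F R}"

definition End :: "'a set \<Rightarrow> (nat \<times> 'a list set) set \<Rightarrow> ('a \<Rightarrow> 'a) set" where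
  "End A Q = {g \<in> A \<rightarrow>\<^sub>E A. \<forall>R\<in>Q. preserves_map g R}"

definition is_gquord :: "'a set \<Rightarrow> nat \<times> 'a list set \<Rightarrow> bool" where
  "is_gquord A R = (case R of (m, \<rho>) \<Rightarrow>
     R \<in> Rel A
     \<and> (\<forall>a\<in>A. replicate m a \<in> \<rho>)
     \<and> (\<forall>X :: nat \<Rightarrow> nat \<Rightarrow> 'a.
          (\<forall>i<m. map (\<lambda>j. X i j) [0..<m] \<in> \<rho>)
          \<and> (\<forall>j<m. map (\<lambda>i. X i j) [0..<m] \<in> \<rho>)
          \<longrightarrow> map (\<lambda>i. X i i) [0..<m] \<in> \<rho>))"

definition gQuord :: "'a set \<Rightarrow> (nat \<times> 'a list set) set" where
  "gQuord A = {R. is_gquord A R}"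

definition gQuordM :: "'a set \<Rightarrow> ('a \<Rightarrow> 'a) set \<Rightarrow> (nat \<times> 'a list set) set" where
  "gQuordM A M = {R \<in> gQuord A. \<forall>g\<in>M. preserves_map g R}"

text \<open>Gamma_M for a fixed enumeration as = [a_1,...,a_k] of A.\<close>
definition Gamma :: "'a list \<Rightarrow> ('a \<Rightarrow> 'a) set \<Rightarrow> nat \<times> 'a list set" where
  "Gamma as M = (length as, {map g as | g. g \<in> M})"

definition trl :: "'a set \<Rightarrow> nat \<times> ('a list \<Rightarrow> 'a) \<Rightarrow> ('a \<Rightarrow> 'a) set" where
  "trl A F = (case F of (n, f) \<Rightarrow>
     {restrict (\<lambda>x. f (bs[i := x])) A | i bs. i < n \<and> bs \<in> tuples A n})"

definition star :: "'a set \<Rightarrow> ('a \<Rightarrow> 'a) set \<Rightarrow> (nat \<times> ('a list \<Rightarrow> 'a)) set" where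
  "star A N = {F \<in> Ops A. trl A F \<subseteq> N}"

definition monoid_on :: "'a set \<Rightarrow> ('a \<Rightarrow> 'a) set \<Rightarrow> bool" where
  "monoid_on A N = (N \<subseteq> A \<rightarrow>\<^sub>E A \<and> restrict id A \<in> N
     \<and> (\<forall>g\<in>N. \<forall>h\<in>N. compose A g h \<in> N))"

definition proj :: "'a set \<Rightarrow> nat \<Rightarrow> nat \<Rightarrow> nat \<times> ('a list \<Rightarrow> 'a)" where
  "proj A n i = (n, \<lambda>xs. if xs \<in> tuples A n then xs ! i else undefined)"

definition superpos :: "'a set \<Rightarrow> nat \<Rightarrow> ('a list \<Rightarrow> 'a) \<Rightarrow> ('a list \<Rightarrow> 'a) list
                        \<Rightarrow> nat \<times> ('a list \<Rightarrow> 'a)" where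
  "superpos A m f gs = (m, \<lambda>xs. if xs \<in> tuples A m then f (map (\<lambda>g. g xs) gs) else undefined)"

definition clone :: "'a set \<Rightarrow> (nat \<times> ('a list \<Rightarrow> 'a)) set \<Rightarrow> bool" where
  "clone A C = (C \<subseteq> Ops A
     \<and> (\<forall>n i. 1 \<le> n \<and> i < n \<longrightarrow> proj A n i \<in> C)
     \<and> (\<forall>n f m gs. (n, f) \<in> C \<and> 1 \<le> m \<and> length gs = n \<and> (\<forall>g\<in>set gs. (m, g) \<in> C)
          \<longrightarrow> superpos A m f gs \<in> C))"

definition ubar :: "'a set \<Rightarrow> ('a \<Rightarrow> 'a) set \<Rightarrow> ('a \<Rightarrow> 'a) set" where
  "ubar A M = \<Inter> {N. M \<subseteq> N \<and> monoid_on A N \<and> clone A (star A N)}"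

definition u_closed :: "'a set \<Rightarrow> ('a \<Rightarrow> 'a) set \<Rightarrow> bool" where
  "u_closed A M = (ubar A M = M)"

text \<open>Positive formulas (\<exists>, \<and>, \<or>, =) over relation symbols; PFalse is the empty disjunction.\<close>
datatype 'r pform =
    PAtom 'r "nat list"
  | PEq nat nat
  | PFalse
  | PAnd "'r pform" "'r pform"
  | POr "'r pform" "'r pform"
  | PEx nat "'r pform"

fun pform_over :: "(nat \<times> 'a list set) set \<Rightarrow> (nat \<times> 'a list set) pform \<Rightarrow> bool" where
  "pform_over Q (PAtom R xs) = (R \<in> Q \<and> length xs = fst R)"
| "pform_over Q (PEq i j) = True"
| "pform_over Q PFalse = True"
| "pform_over Q (PAnd \<phi> \<psi>) = (pform_over Q \<phi> \<and> pform_over Q \<psi>)"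
| "pform_over Q (POr \<phi> \<psi>) = (pform_over Q \<phi> \<and> pform_over Q \<psi>)"
| "pform_over Q (PEx i \<phi>) = pform_over Q \<phi>"

fun holds :: "'a set \<Rightarrow> (nat \<times> 'a list set) pform \<Rightarrow> (nat \<Rightarrow> 'a) \<Rightarrow> bool" where
  "holds A (PAtom R xs) v = (map v xs \<in> snd R)"
| "holds A (PEq i j) v = (v i = v j)"
| "holds A PFalse v = False"
| "holds A (PAnd \<phi> \<psi>) v = (holds A \<phi> v \<and> holds A \<psi> v)"
| "holds A (POr \<phi> \<psi>) v = (holds A \<phi> v \<or> holds A \<psi> v)"
| "holds A (PEx i \<phi>) v = (\<exists>a\<in>A. holds A \<phi> (v(i := a)))"

text \<open>[Q]_{\<exists>,\<and>,\<or>,=}: relations (arity \<ge> 1) defined on A by positive formulas over Q,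
  with the listed variables ys as the free (distinguished) variables.\<close>
definition pos_def :: "'a set \<Rightarrow> (nat \<times> 'a list set) set \<Rightarrow> (nat \<times> 'a list set) set" where
  "pos_def A Q = {(length ys, {map v ys | v. (\<forall>i. v i \<in> A) \<and> holds A \<phi> v}) | \<phi> ys.
                    ys \<noteq> [] \<and> pform_over Q \<phi>}"

end

theory Submission
  imports Defs
begin

text \<open>
  The key fact is that an operation preserves a generalized quasiorder \<rho> as soon as all its
  translations do: replacing the arguments one at a time by the rows of a matrix of tuples, each
  step is the diagonal of a matrix whose rows and columns are already known to lie in \<rho>.
  Hence \<open>(End Q)\<^sup>* = Pol Q\<close> for every set Q of generalized quasiorders, and this is a clone.
  Conversely, if \<open>N\<^sup>*\<close> is a clone for a monoid N, then \<open>\<Gamma>\<^sub>N\<close> is a generalized quasiorder: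
  a matrix with rows and columns in \<open>\<Gamma>\<^sub>N\<close> is the table of a binary operation all of whose
  translations lie in N, and identifying its two variables yields the diagonal.
  As \<open>End {\<Gamma>\<^sub>N} = N\<close>, the u-closure of M is \<open>End (gQuord M)\<close>, which gives (a) and (b).
  For (c), over a finite set the positively definable relations \<open>[Q]\<close> are exactly the
  invariants of \<open>End Q\<close>, so \<open>[Q] = [Q']\<close> iff \<open>End Q = End Q'\<close>.
\<close>

section \<open>Translations and generalized quasiorders\<close>

lemma Rel_tuple: "(m, \<rho>) \<in> Rel A \<Longrightarrow> r \<in> \<rho> \<Longrightarrow> set r \<subseteq> A \<and> length r = m"
  by (auto simp: Rel_def tuples_def)

lemma gQuord_subset_Rel: "gQuord A \<subseteq> Rel A"
  by (auto simp: gQuord_def is_gquord_def)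

lemma gquord_tuple: "is_gquord A (m, \<rho>) \<Longrightarrow> r \<in> \<rho> \<Longrightarrow> set r \<subseteq> A \<and> length r = m"
  by (auto simp: is_gquord_def Rel_def tuples_def)

lemma gquord_replicate: "is_gquord A (m, \<rho>) \<Longrightarrow> a \<in> A \<Longrightarrow> replicate m a \<in> \<rho>"
  by (simp add: is_gquord_def)

lemma gquord_diagonal:
  assumes "is_gquord A (m, \<rho>)"
    and "\<And>i. i < m \<Longrightarrow> map (\<lambda>j. X i j) [0..<m] \<in> \<rho>"
    and "\<And>j. j < m \<Longrightarrow> map (\<lambda>i. X i j) [0..<m] \<in> \<rho>"
  shows "map (\<lambda>i. X i i) [0..<m] \<in> \<rho>"
  using assms unfolding is_gquord_def by blast

lemma trl_iff:
  "g \<in> trl A (n, f) \<longleftrightarrow> (\<exists>i bs. i < n \<and> bs \<in> tuples A n \<and> g = restrict (\<lambda>x. f (bs[i := x])) A)"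
  by (auto simp: trl_def)

lemma translation_in_trl:
  "i < n \<Longrightarrow> bs \<in> tuples A n \<Longrightarrow> restrict (\<lambda>x. f (bs[i := x])) A \<in> trl A (n, f)"
  by (auto simp: trl_def)

lemma translation_preserves_gquord:
  assumes gq: "is_gquord A (m, \<rho>)" and F: "preserves (n, f) (m, \<rho>)" and g: "g \<in> trl A (n, f)"
  shows "preserves_map g (m, \<rho>)"
  unfolding preserves_map_def snd_conv
proof
  obtain i bs where i: "i < n" and bs: "bs \<in> tuples A n" and g: "g = restrict (\<lambda>x. f (bs[i := x])) A"
    using g by (auto simp: trl_iff)
  fix r assume r: "r \<in> \<rho>"
  define rs where "rs = (map (replicate m) bs)[i := r]"
  have "set rs \<subseteq> \<rho>"
    using bs r gquord_replicate[OF gq] set_update_subset_insert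
    by (fastforce simp: rs_def tuples_def)
  moreover have "length rs = n"
    using bs by (simp add: rs_def tuples_def)
  ultimately have "map (\<lambda>l. f (map (\<lambda>s. s ! l) rs)) [0..<m] \<in> \<rho>"
    using F by (simp add: preserves_def)
  moreover have "map (\<lambda>l. f (map (\<lambda>s. s ! l) rs)) [0..<m] = map g r"
  proof (rule nth_equalityI)
    have r_tuple: "set r \<subseteq> A" "length r = m"
      using gquord_tuple[OF gq r] by auto
    then show "length (map (\<lambda>l. f (map (\<lambda>s. s ! l) rs)) [0..<m]) = length (map g r)"
      by simp
    fix l assume "l < length (map (\<lambda>l. f (map (\<lambda>s. s ! l) rs)) [0..<m])"
    then have "l < m" by simp
    moreover have "map (\<lambda>s. s ! l) rs = bs[i := r ! l]"
      using \<open>l < m\<close> i bs by (auto intro!: nth_equalityI simp: rs_def tuples_def nth_list_update)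
    ultimately show "map (\<lambda>l. f (map (\<lambda>s. s ! l) rs)) [0..<m] ! l = map g r ! l"
      using r_tuple nth_mem by (fastforce simp: g)
  qed
  ultimately show "map g r \<in> \<rho>"
    by simp
qed

lemma column_in_tuples:
  "(m, \<rho>) \<in> Rel A \<Longrightarrow> set rs \<subseteq> \<rho> \<Longrightarrow> l < m \<Longrightarrow> map (\<lambda>r. r ! l) rs \<in> tuples A (length rs)"
  by (auto simp: tuples_def Rel_def dest!: subsetD)

lemma translations_preserve_partial_columns:
  assumes F: "(n, f) \<in> Ops A" and gq: "is_gquord A (m, \<rho>)"
    and trl_pres: "\<forall>g\<in>trl A (n, f). preserves_map g (m, \<rho>)"
    and rs: "length rs = n" "set rs \<subseteq> \<rho>"
  shows "j \<le> n \<Longrightarrow> bs \<in> tuples A n \<Longrightarrow>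
    map (\<lambda>l. f (map (\<lambda>r. r ! l) (take j rs) @ drop j bs)) [0..<m] \<in> \<rho>"
proof (induction j arbitrary: bs)
  case 0
  then have "f bs \<in> A"
    using F by (simp add: Ops_def)
  then show ?case
    using gquord_replicate[OF gq] by (simp add: map_replicate_const)
next
  case (Suc j)
  have rel: "(m, \<rho>) \<in> Rel A"
    using gq by (simp add: is_gquord_def)
  have j: "j < length rs" "j < length bs" and rs_j: "rs ! j \<in> \<rho>"
    using Suc.prems rs by (auto simp: tuples_def)
  then have rs_j_tuple: "rs ! j \<in> tuples A m"
    using rel by (auto simp: Rel_def)
  txt \<open>Going from \<open>j\<close> to \<open>j + 1\<close> is the diagonal of the matrix \<open>X\<close>: its rows are translations
    of \<open>f\<close> applied to \<open>rs ! j\<close>, its columns are instances of the induction hypothesis.\<close>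
  define X where "X i l = f (map (\<lambda>r. r ! i) (take j rs) @ rs ! j ! l # drop (Suc j) bs)" for i l
  have "map (\<lambda>i. X i i) [0..<m] \<in> \<rho>"
  proof (rule gquord_diagonal[OF gq, where X = X])
    fix i assume "i < m"
    define cs where "cs = map (\<lambda>r. r ! i) (take j rs) @ drop j bs"
    have "cs \<in> tuples A n"
      using Suc.prems rs column_in_tuples[OF rel, of "take j rs" i] \<open>i < m\<close> set_take_subset[of j rs]
      by (auto simp: cs_def tuples_def dest: in_set_dropD)
    then have "restrict (\<lambda>x. f (cs[j := x])) A \<in> trl A (n, f)"
      using Suc.prems by (intro translation_in_trl) auto
    then have "map (restrict (\<lambda>x. f (cs[j := x])) A) (rs ! j) \<in> \<rho>"
      using trl_pres rs_j by (auto simp: preserves_map_def)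
    moreover have "map (restrict (\<lambda>x. f (cs[j := x])) A) (rs ! j) = map (X i) [0..<m]"
      using rs_j_tuple j nth_mem by (fastforce intro!: nth_equalityI
          simp: X_def cs_def tuples_def list_update_append Cons_nth_drop_Suc[symmetric])
    ultimately show "map (X i) [0..<m] \<in> \<rho>"
      by simp
  next
    fix l assume "l < m"
    then have "bs[j := rs ! j ! l] \<in> tuples A n"
      using Suc.prems rs_j_tuple set_update_subset_insert[of bs j] by (fastforce simp: tuples_def)
    then have "map (\<lambda>i. f (map (\<lambda>r. r ! i) (take j rs) @ drop j (bs[j := rs ! j ! l]))) [0..<m] \<in> \<rho>"
      using Suc by simp
    moreover have "drop j (bs[j := rs ! j ! l]) = rs ! j ! l # drop (Suc j) bs"
      using j by (simp add: Cons_nth_drop_Suc[symmetric])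
    ultimately show "map (\<lambda>i. X i l) [0..<m] \<in> \<rho>"
      by (simp add: X_def)
  qed
  moreover have "take (Suc j) rs = take j rs @ [rs ! j]"
    using j by (simp add: take_Suc_conv_app_nth)
  ultimately show ?case
    using j by (simp add: X_def Cons_nth_drop_Suc)
qed

lemma preserves_if_translations_preserve:
  assumes F: "(n, f) \<in> Ops A" and gq: "is_gquord A (m, \<rho>)"
    and trl_pres: "\<forall>g\<in>trl A (n, f). preserves_map g (m, \<rho>)"
  shows "preserves (n, f) (m, \<rho>)"
  unfolding preserves_def prod.case
proof (intro allI impI)
  fix rs assume "length rs = n \<and> set rs \<subseteq> \<rho>"
  then have rs: "length rs = n" "set rs \<subseteq> \<rho>"
    by auto
  have "1 \<le> m" and rel: "(m, \<rho>) \<in> Rel A"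
    using gq by (auto simp: is_gquord_def Rel_def)
  then have "map (\<lambda>r. r ! 0) rs \<in> tuples A n"
    using rs column_in_tuples by fastforce
  from translations_preserve_partial_columns[OF assms rs order_refl this] rs
  show "map (\<lambda>l. f (map (\<lambda>r. r ! l) rs)) [0..<m] \<in> \<rho>"
    by simp
qed

lemma preserves_iff_translations_preserve:
  assumes "(n, f) \<in> Ops A" and "is_gquord A (m, \<rho>)"
  shows "preserves (n, f) (m, \<rho>) \<longleftrightarrow> (\<forall>g\<in>trl A (n, f). preserves_map g (m, \<rho>))"
  using assms translation_preserves_gquord preserves_if_translations_preserve by blast

lemma trl_subset_PiE:
  assumes "(n, f) \<in> Ops A"
  shows "trl A (n, f) \<subseteq> A \<rightarrow>\<^sub>E A"
proof
  fix g assume "g \<in> trl A (n, f)"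
  then obtain i bs where bs: "bs \<in> tuples A n" and g: "g = restrict (\<lambda>x. f (bs[i := x])) A"
    by (auto simp: trl_iff)
  have "bs[i := x] \<in> tuples A n" if "x \<in> A" for x
    using bs that set_update_subset_insert[of bs i x] by (auto simp: tuples_def)
  then show "g \<in> A \<rightarrow>\<^sub>E A"
    using assms by (auto simp: g Ops_def)
qed

lemma star_End_gQuord:
  assumes "Q \<subseteq> gQuord A"
  shows "star A (End A Q) = Pol A Q"
proof -
  have "trl A F \<subseteq> End A Q \<longleftrightarrow> (\<forall>R\<in>Q. preserves F R)" if F: "F \<in> Ops A" for F
  proof -
    obtain n f where nf: "F = (n, f)"
      by fastforce
    have "preserves F R \<longleftrightarrow> (\<forall>g\<in>trl A F. preserves_map g R)" if "R \<in> Q" for R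
      using assms that F preserves_iff_translations_preserve[of n f A "fst R" "snd R"]
      by (auto simp: nf gQuord_def)
    then show ?thesis
      using trl_subset_PiE[of n f A] F by (auto simp: nf End_def)
  qed
  then show ?thesis
    by (auto simp: star_def Pol_def)
qed

section \<open>Clones of polymorphisms\<close>

lemma proj_preserves:
  assumes "(m, \<rho>) \<in> Rel A" and "i < n"
  shows "preserves (proj A n i) (m, \<rho>)"
  unfolding preserves_def proj_def prod.case
proof (intro allI impI)
  fix rs assume rs: "length rs = n \<and> set rs \<subseteq> \<rho>"
  then have "rs ! i \<in> \<rho>"
    using assms(2) by auto
  moreover have "length (rs ! i) = m"
    using Rel_tuple[OF assms(1) \<open>rs ! i \<in> \<rho>\<close>] by simp
  moreover have "map (\<lambda>l. if map (\<lambda>r. r ! l) rs \<in> tuples A n then map (\<lambda>r. r ! l) rs ! i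
      else undefined) [0..<m] = rs ! i"
  proof (rule nth_equalityI)
    fix l assume "l < length (map (\<lambda>l. if map (\<lambda>r. r ! l) rs \<in> tuples A n
      then map (\<lambda>r. r ! l) rs ! i else undefined) [0..<m])"
    then have "map (\<lambda>r. r ! l) rs \<in> tuples A n"
      using rs column_in_tuples[OF assms(1)] by fastforce
    then show "map (\<lambda>l. if map (\<lambda>r. r ! l) rs \<in> tuples A n then map (\<lambda>r. r ! l) rs ! i
      else undefined) [0..<m] ! l = rs ! i ! l"
      using rs assms(2) \<open>l < _\<close> by simp
  qed (simp add: \<open>length (rs ! i) = m\<close>)
  ultimately show "map (\<lambda>l. if map (\<lambda>r. r ! l) rs \<in> tuples A n then map (\<lambda>r. r ! l) rs ! i
      else undefined) [0..<m] \<in> \<rho>"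
    by simp
qed

lemma superpos_preserves:
  assumes R: "(p, \<rho>) \<in> Rel A" and f: "preserves (n, f) (p, \<rho>)"
    and gs: "length gs = n" "\<forall>g\<in>set gs. preserves (m, g) (p, \<rho>)"
  shows "preserves (superpos A m f gs) (p, \<rho>)"
  unfolding preserves_def superpos_def prod.case
proof (intro allI impI)
  fix rs assume rs: "length rs = m \<and> set rs \<subseteq> \<rho>"
  define ss where "ss = map (\<lambda>g. map (\<lambda>l. g (map (\<lambda>r. r ! l) rs)) [0..<p]) gs"
  have "set ss \<subseteq> \<rho>"
    using gs rs by (auto simp: ss_def preserves_def)
  moreover have "length ss = n"
    using gs by (simp add: ss_def)
  ultimately have "map (\<lambda>l. f (map (\<lambda>s. s ! l) ss)) [0..<p] \<in> \<rho>"
    using f unfolding preserves_def prod.case by blast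
  moreover have "map (\<lambda>l. f (map (\<lambda>s. s ! l) ss)) [0..<p] = map (\<lambda>l.
      if map (\<lambda>r. r ! l) rs \<in> tuples A m then f (map (\<lambda>g. g (map (\<lambda>r. r ! l) rs)) gs) else undefined) [0..<p]"
    using rs column_in_tuples[OF R] by (auto simp: ss_def intro!: map_cong arg_cong[where f = f])
  ultimately show "map (\<lambda>l. if map (\<lambda>r. r ! l) rs \<in> tuples A m
      then f (map (\<lambda>g. g (map (\<lambda>r. r ! l) rs)) gs) else undefined) [0..<p] \<in> \<rho>"
    by simp
qed

lemma superpos_in_Ops:
  assumes "(n, f) \<in> Ops A" and "1 \<le> m" and "length gs = n" and "\<forall>g\<in>set gs. (m, g) \<in> Ops A"
  shows "superpos A m f gs \<in> Ops A"
proof -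
  have "map (\<lambda>g. g xs) gs \<in> tuples A n" if "xs \<in> tuples A m" for xs
    using assms that by (auto simp: tuples_def Ops_def)
  then show ?thesis
    using assms by (auto simp: superpos_def Ops_def)
qed

lemma clone_Pol:
  assumes "Q \<subseteq> Rel A"
  shows "clone A (Pol A Q)"
  unfolding clone_def
proof (intro conjI allI impI)
  show "Pol A Q \<subseteq> Ops A"
    by (auto simp: Pol_def)
  fix n i :: nat assume "1 \<le> n \<and> i < n"
  then show "proj A n i \<in> Pol A Q"
    using assms proj_preserves by (fastforce simp: Pol_def Ops_def proj_def tuples_def)
next
  fix n f m gs
  assume "(n, f) \<in> Pol A Q \<and> 1 \<le> m \<and> length gs = n \<and> (\<forall>g\<in>set gs. (m, g) \<in> Pol A Q)"
  then show "superpos A m f gs \<in> Pol A Q"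
    using assms superpos_in_Ops[of n f A m gs] superpos_preserves[of _ _ A n f gs m]
    by (fastforce simp: Pol_def)
qed

lemma monoid_End:
  assumes "Q \<subseteq> Rel A"
  shows "monoid_on A (End A Q)"
  unfolding monoid_on_def
proof (intro conjI ballI)
  have tuple: "set r \<subseteq> A" if "R \<in> Q" "r \<in> snd R" for R r
    using assms that Rel_tuple[of "fst R" "snd R" A r] by auto
  show "End A Q \<subseteq> A \<rightarrow>\<^sub>E A"
    by (auto simp: End_def)
  have "map (restrict id A) r = r" if "R \<in> Q" "r \<in> snd R" for R r
    using tuple[OF that] by (force intro!: map_idI)
  then show "restrict id A \<in> End A Q"
    by (auto simp: End_def preserves_map_def)
  fix g h assume g: "g \<in> End A Q" and h: "h \<in> End A Q"
  have "map (compose A g h) r \<in> snd R" if "R \<in> Q" "r \<in> snd R" for R r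
  proof -
    have "map h r \<in> snd R"
      using h that by (simp add: End_def preserves_map_def)
    then have "map g (map h r) \<in> snd R"
      using g that unfolding End_def preserves_map_def by blast
    moreover have "map (compose A g h) r = map g (map h r)"
      using tuple[OF that] by (auto simp: compose_def)
    ultimately show ?thesis
      by (simp only:)
  qed
  moreover have "compose A g h \<in> A \<rightarrow>\<^sub>E A"
    using g h by (auto simp: End_def compose_def)
  ultimately show "compose A g h \<in> End A Q"
    by (auto simp: End_def preserves_map_def)
qed

section \<open>Monoids whose star is a clone\<close>

lemma unary_in_star:
  assumes "(1, f) \<in> star A N" and "A \<noteq> {}"
  shows "restrict (\<lambda>x. f [x]) A \<in> N"
proof -
  obtain a where "a \<in> A"
    using assms(2) by blast
  then have "restrict (\<lambda>x. f ([a][0 := x])) A \<in> trl A (1, f)"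
    by (intro translation_in_trl) (auto simp: tuples_def)
  then show ?thesis
    using assms(1) by (auto simp: star_def)
qed

lemma const_in_clone_star:
  assumes "clone A (star A N)" and "a \<in> A"
  shows "restrict (\<lambda>_. a) A \<in> N"
proof -
  obtain pr where pr: "proj A 2 1 = (2, pr)"
    by (simp add: proj_def)
  moreover have "proj A 2 1 \<in> star A N"
    using assms(1) by (simp add: clone_def)
  ultimately have "(2, pr) \<in> star A N"
    by simp
  moreover have "restrict (\<lambda>x. pr ([a, a][0 := x])) A \<in> trl A (2, pr)"
    using assms(2) by (intro translation_in_trl) (auto simp: tuples_def)
  moreover have "restrict (\<lambda>x. pr ([a, a][0 := x])) A = restrict (\<lambda>_. a) A"
    using assms(2) pr by (auto simp: proj_def tuples_def)
  ultimately show ?thesis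
    by (auto simp: star_def)
qed

lemma binary_table_in_star:
  assumes N: "N \<subseteq> A \<rightarrow>\<^sub>E A"
    and rows: "\<forall>a\<in>A. restrict (\<lambda>x. h a x) A \<in> N"
    and cols: "\<forall>a\<in>A. restrict (\<lambda>x. h x a) A \<in> N"
  shows "(2, \<lambda>xs. if xs \<in> tuples A 2 then h (xs ! 0) (xs ! 1) else undefined) \<in> star A N"
    (is "(2, ?f) \<in> _")
proof -
  have tuples_2: "xs \<in> tuples A 2 \<longleftrightarrow> (\<exists>x\<in>A. \<exists>y\<in>A. xs = [x, y])" for xs
    by (auto simp: tuples_def numeral_2_eq_2 length_Suc_conv)
  have "h x y \<in> A" if "x \<in> A" "y \<in> A" for x y
    using rows N that by (metis PiE_mem restrict_apply' subsetD)
  then have "(2, ?f) \<in> Ops A"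
    by (auto simp: Ops_def tuples_2)
  moreover have "trl A (2, ?f) \<subseteq> N"
  proof
    fix g assume "g \<in> trl A (2, ?f)"
    then obtain i x y where "i < 2" "x \<in> A" "y \<in> A" and g: "g = restrict (\<lambda>z. ?f ([x, y][i := z])) A"
      by (auto simp: trl_iff tuples_2)
    then consider "g = restrict (\<lambda>z. h z y) A" | "g = restrict (\<lambda>z. h x z) A"
      by (fastforce simp: less_2_cases_iff tuples_2 intro!: restrict_ext)
    then show "g \<in> N"
      using rows cols \<open>x \<in> A\<close> \<open>y \<in> A\<close> by cases auto
  qed
  ultimately show ?thesis
    by (simp add: star_def)
qed

lemma clone_star_diagonal:
  assumes clone: "clone A (star A N)" and "N \<subseteq> A \<rightarrow>\<^sub>E A" and "A \<noteq> {}"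
    and "\<forall>a\<in>A. restrict (\<lambda>x. h a x) A \<in> N" and "\<forall>a\<in>A. restrict (\<lambda>x. h x a) A \<in> N"
  shows "restrict (\<lambda>x. h x x) A \<in> N"
proof -
  define f where "f = (\<lambda>xs. if xs \<in> tuples A 2 then h (xs ! 0) (xs ! 1) else undefined)"
  have "(2, f) \<in> star A N"
    using binary_table_in_star[OF assms(2,4,5)] by (simp add: f_def)
  obtain p where p: "proj A 1 0 = (1, p)"
    by (simp add: proj_def)
  moreover have "proj A 1 0 \<in> star A N"
    using clone by (simp add: clone_def)
  ultimately have "length [p, p] = 2" "\<forall>g\<in>set [p, p]. (1, g) \<in> star A N"
    by auto
  then have "superpos A 1 f [p, p] \<in> star A N"
    using clone \<open>(2, f) \<in> star A N\<close> unfolding clone_def by blast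
  then have "restrict (\<lambda>x. f [p [x], p [x]]) A \<in> N"
    using unary_in_star \<open>A \<noteq> {}\<close> by (fastforce simp: superpos_def tuples_def cong: restrict_cong)
  moreover have "restrict (\<lambda>x. f [p [x], p [x]]) A = restrict (\<lambda>x. h x x) A"
    using p by (auto simp: proj_def f_def tuples_def)
  ultimately show ?thesis
    by simp
qed

lemma Gamma_iff: "r \<in> snd (Gamma as M) \<longleftrightarrow> (\<exists>g\<in>M. r = map g as)"
  by (auto simp: Gamma_def)

lemma map_in_Gamma_iff:
  assumes "M \<subseteq> A \<rightarrow>\<^sub>E A" and "set as = A"
  shows "map \<phi> as \<in> snd (Gamma as M) \<longleftrightarrow> restrict \<phi> A \<in> M"
proof -
  have "map \<phi> as = map g as \<longleftrightarrow> restrict \<phi> A = g" if "g \<in> M" for g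
    using assms that by (force simp: PiE_iff extensional_def)
  then show ?thesis
    by (auto simp: Gamma_iff)
qed

lemma Gamma_preserved:
  assumes "monoid_on A M" and "set as = A" and "g \<in> M"
  shows "preserves_map g (Gamma as M)"
  unfolding preserves_map_def
proof
  fix r assume "r \<in> snd (Gamma as M)"
  then obtain h where h: "h \<in> M" and r: "r = map h as"
    by (auto simp: Gamma_iff)
  then have "compose A g h \<in> M"
    using assms by (simp add: monoid_on_def)
  moreover have "map g r = map (compose A g h) as"
    using assms(2) by (simp add: r compose_def)
  ultimately show "map g r \<in> snd (Gamma as M)"
    by (auto simp: Gamma_iff)
qed

lemma End_Gamma:
  assumes M: "monoid_on A M" and as: "set as = A"
  shows "End A {Gamma as M} = M"
proof
  have M_PiE: "M \<subseteq> A \<rightarrow>\<^sub>E A"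
    using M by (simp add: monoid_on_def)
  then show "M \<subseteq> End A {Gamma as M}"
    using Gamma_preserved[OF M as] by (auto simp: End_def)
  show "End A {Gamma as M} \<subseteq> M"
  proof
    fix g assume g: "g \<in> End A {Gamma as M}"
    have "restrict id A \<in> M"
      using M by (simp add: monoid_on_def)
    then have "map id as \<in> snd (Gamma as M)"
      using map_in_Gamma_iff[OF M_PiE as, of id] by blast
    then have "map g as \<in> snd (Gamma as M)"
      using g by (simp add: End_def preserves_map_def)
    then have "restrict g A \<in> M"
      by (simp add: map_in_Gamma_iff[OF M_PiE as])
    moreover have "g \<in> A \<rightarrow>\<^sub>E A"
      using g by (simp add: End_def)
    ultimately show "g \<in> M"
      by (simp add: PiE_restrict)
  qed
qed

definition list_index :: "'a list \<Rightarrow> 'a \<Rightarrow> nat" where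
  "list_index as = inv_into {..<length as} ((!) as)"

lemma list_index_less:
  assumes "x \<in> set as"
  shows "list_index as x < length as"
proof -
  have "x \<in> (!) as ` {..<length as}"
    using assms by (auto simp: in_set_conv_nth)
  then have "list_index as x \<in> {..<length as}"
    unfolding list_index_def by (rule inv_into_into)
  then show ?thesis
    by simp
qed

lemma map_upt_eq_map_list_index:
  assumes "distinct as"
  shows "map Y [0..<length as] = map (\<lambda>x. Y (list_index as x)) as"
proof -
  have "list_index as (as ! i) = i" if "i < length as" for i
    using assms that by (simp add: list_index_def inv_into_f_f inj_on_nth)
  then show ?thesis
    by (auto intro!: nth_equalityI)
qed

lemma Gamma_in_Rel:
  assumes "A \<noteq> {}" and "set as = A" and "M \<subseteq> A \<rightarrow>\<^sub>E A"
  shows "Gamma as M \<in> Rel A"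
proof -
  have "map g as \<in> tuples A (length as)" if "g \<in> M" for g
    using assms(2,3) that by (auto simp: tuples_def)
  moreover have "as \<noteq> []"
    using assms(1,2) by auto
  ultimately show ?thesis
    by (auto simp: Gamma_def Rel_def Suc_le_eq)
qed

lemma Gamma_gQuord_if_clone_star:
  assumes "A \<noteq> {}" and "distinct as" and as: "set as = A"
    and M: "monoid_on A M" and clone: "clone A (star A M)"
  shows "Gamma as M \<in> gQuord A"
proof -
  have M_PiE: "M \<subseteq> A \<rightarrow>\<^sub>E A"
    using M by (simp add: monoid_on_def)
  note Gamma_map = map_in_Gamma_iff[OF M_PiE as]
  note upt_as = map_upt_eq_map_list_index[OF assms(2)]
  have "replicate (length as) a \<in> snd (Gamma as M)" if "a \<in> A" for a
  proof -
    have "map (\<lambda>_. a) as \<in> snd (Gamma as M)"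
      using const_in_clone_star[OF clone that] Gamma_map by blast
    then show ?thesis
      by (simp add: map_replicate_const)
  qed
  moreover have "map (\<lambda>i. X i i) [0..<length as] \<in> snd (Gamma as M)"
    if rows: "\<forall>i<length as. map (\<lambda>j. X i j) [0..<length as] \<in> snd (Gamma as M)"
      and cols: "\<forall>j<length as. map (\<lambda>i. X i j) [0..<length as] \<in> snd (Gamma as M)" for X
  proof -
    let ?h = "\<lambda>x y. X (list_index as x) (list_index as y)"
    have "restrict (?h a) A \<in> M" "restrict (\<lambda>x. ?h x a) A \<in> M" if "a \<in> A" for a
    proof -
      have "list_index as a < length as"
        using list_index_less[of a as] that as by simp
      then have "map (\<lambda>j. X (list_index as a) j) [0..<length as] \<in> snd (Gamma as M)"
        and "map (\<lambda>i. X i (list_index as a)) [0..<length as] \<in> snd (Gamma as M)"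
        using rows cols by blast+
      then show "restrict (?h a) A \<in> M" "restrict (\<lambda>x. ?h x a) A \<in> M"
        by (simp_all add: upt_as Gamma_map)
    qed
    then have "restrict (\<lambda>x. ?h x x) A \<in> M"
      using clone_star_diagonal[OF clone M_PiE assms(1), where h = ?h] by blast
    then show ?thesis
      by (simp add: upt_as Gamma_map)
  qed
  ultimately show ?thesis
    using Gamma_in_Rel[OF assms(1) as M_PiE] by (auto simp: gQuord_def is_gquord_def Gamma_def)
qed

section \<open>The u-closure\<close>

lemma subset_ubar: "M \<subseteq> ubar A M"
  by (auto simp: ubar_def)

lemma ubar_least: "M \<subseteq> N \<Longrightarrow> monoid_on A N \<Longrightarrow> clone A (star A N) \<Longrightarrow> ubar A M \<subseteq> N"
  by (auto simp: ubar_def)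

lemma clone_star_End_gQuord: "Q \<subseteq> gQuord A \<Longrightarrow> clone A (star A (End A Q))"
  using star_End_gQuord clone_Pol gQuord_subset_Rel by (metis subset_trans)

lemma End_antimono: "Q \<subseteq> Q' \<Longrightarrow> End A Q' \<subseteq> End A Q"
  by (auto simp: End_def)

lemma gQuordM_subset_gQuord: "gQuordM A M \<subseteq> gQuord A"
  by (auto simp: gQuordM_def)

lemma ubar_eq_End_gQuordM:
  assumes "finite A" and "A \<noteq> {}" and M: "M \<subseteq> A \<rightarrow>\<^sub>E A"
  shows "ubar A M = End A (gQuordM A M)"
proof
  have "M \<subseteq> End A (gQuordM A M)"
    using M by (auto simp: End_def gQuordM_def)
  then show "ubar A M \<subseteq> End A (gQuordM A M)"
    using ubar_least monoid_End clone_star_End_gQuord gQuord_subset_Rel gQuordM_subset_gQuord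
    by (metis subset_trans)
next
  obtain as where as: "distinct as" "set as = A"
    using finite_distinct_list[OF assms(1)] by blast
  have "End A (gQuordM A M) \<subseteq> N" if "M \<subseteq> N" "monoid_on A N" "clone A (star A N)" for N
  proof -
    have "Gamma as N \<in> gQuordM A M"
      using that Gamma_gQuord_if_clone_star[OF assms(2) as] Gamma_preserved[OF _ as(2)]
      by (auto simp: gQuordM_def)
    then have "End A (gQuordM A M) \<subseteq> End A {Gamma as N}"
      by (intro End_antimono) simp
    then show ?thesis
      using End_Gamma[OF that(2) as(2)] by simp
  qed
  then show "End A (gQuordM A M) \<subseteq> ubar A M"
    by (auto simp: ubar_def)
qed

lemma star_ubar:
  assumes "finite A" and "A \<noteq> {}" and "M \<subseteq> A \<rightarrow>\<^sub>E A"
  shows "star A (ubar A M) = Pol A (gQuordM A M)"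
  using ubar_eq_End_gQuordM[OF assms] star_End_gQuord[OF gQuordM_subset_gQuord] by simp

lemma u_closed_End: "Q \<subseteq> gQuord A \<Longrightarrow> u_closed A (End A Q)"
  using ubar_least[OF order_refl] subset_ubar monoid_End clone_star_End_gQuord gQuord_subset_Rel
  by (metis subset_antisym subset_trans u_closed_def)

lemma u_closed_monoid_iff:
  assumes "A \<noteq> {}" and as: "distinct as" "set as = A" and M: "monoid_on A M"
  shows u_closed_iff_clone_star: "u_closed A M \<longleftrightarrow> clone A (star A M)"
    and u_closed_iff_Gamma_gQuord: "u_closed A M \<longleftrightarrow> Gamma as M \<in> gQuord A"
    and u_closed_iff_End_Pol_single:
      "u_closed A M \<longleftrightarrow> (\<exists>\<rho>\<in>gQuord A. M = End A {\<rho>} \<and> star A M = Pol A {\<rho>})"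
    and u_closed_iff_End: "u_closed A M \<longleftrightarrow> (\<exists>Q\<subseteq>gQuord A. M = End A Q)"
    and u_closed_iff_star_Pol: "u_closed A M \<longleftrightarrow> (\<exists>Q\<subseteq>gQuord A. star A M = Pol A Q)"
proof -
  have "clone A (star A M)" if "u_closed A M"
  proof -
    have "finite A"
      using as(2) by auto
    then have "M = End A (gQuordM A M)"
      using ubar_eq_End_gQuordM[OF _ assms(1), of M] M that by (simp add: u_closed_def monoid_on_def)
    then show ?thesis
      using clone_star_End_gQuord[OF gQuordM_subset_gQuord, of A M] by simp
  qed
  moreover have "clone A (star A M) \<Longrightarrow> Gamma as M \<in> gQuord A"
    using Gamma_gQuord_if_clone_star[OF assms] .
  moreover have "Gamma as M \<in> gQuord A \<Longrightarrow> M = End A {Gamma as M} \<and> star A M = Pol A {Gamma as M}"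
    using End_Gamma[OF M as(2)] star_End_gQuord[of "{Gamma as M}" A] by auto
  moreover have "M = End A Q \<Longrightarrow> Q \<subseteq> gQuord A \<Longrightarrow> u_closed A M" for Q
    using u_closed_End by blast
  moreover have "star A M = Pol A Q \<Longrightarrow> Q \<subseteq> gQuord A \<Longrightarrow> clone A (star A M)" for Q
    using clone_Pol gQuord_subset_Rel by (metis subset_trans)
  ultimately show "u_closed A M \<longleftrightarrow> clone A (star A M)"
    and "u_closed A M \<longleftrightarrow> Gamma as M \<in> gQuord A"
    and "u_closed A M \<longleftrightarrow> (\<exists>\<rho>\<in>gQuord A. M = End A {\<rho>} \<and> star A M = Pol A {\<rho>})"
    and "u_closed A M \<longleftrightarrow> (\<exists>Q\<subseteq>gQuord A. M = End A Q)"
    and "u_closed A M \<longleftrightarrow> (\<exists>Q\<subseteq>gQuord A. star A M = Pol A Q)"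
    by (blast, blast, blast, blast, (metis empty_subsetI insert_subset))
qed

section \<open>Positive definability\<close>

definition Inv :: "'a set \<Rightarrow> ('a \<Rightarrow> 'a) set \<Rightarrow> (nat \<times> 'a list set) set" where
  "Inv A N = {R \<in> Rel A. \<forall>g\<in>N. preserves_map g R}"

lemma End_Inv_End:
  assumes "Q \<subseteq> Rel A"
  shows "End A (Inv A (End A Q)) = End A Q"
proof
  have "Q \<subseteq> Inv A (End A Q)"
    using assms by (auto simp: Inv_def End_def)
  then show "End A (Inv A (End A Q)) \<subseteq> End A Q"
    by (auto simp: End_def)
  show "End A Q \<subseteq> End A (Inv A (End A Q))"
    by (auto simp: End_def Inv_def)
qed

lemma holds_comp_End:
  assumes "pform_over Q \<phi>" and "g \<in> End A Q" and "\<forall>i. v i \<in> A" and "holds A \<phi> v"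
  shows "holds A \<phi> (g \<circ> v)"
  using assms
proof (induction \<phi> arbitrary: v)
  case (PAtom R xs)
  then have "map v xs \<in> snd R" and "R \<in> Q"
    by auto
  then have "map g (map v xs) \<in> snd R"
    using PAtom.prems(2) unfolding End_def preserves_map_def by blast
  then show ?case
    by (simp add: comp_def)
next
  case (PEx i \<phi>)
  then obtain a where a: "a \<in> A" "holds A \<phi> (v(i := a))"
    by auto
  have "pform_over Q \<phi>" "\<forall>j. (v(i := a)) j \<in> A"
    using PEx.prems a by auto
  then have "holds A \<phi> (g \<circ> v(i := a))"
    using PEx.IH PEx.prems(2) a(2) by blast
  moreover have "g \<circ> v(i := a) = (g \<circ> v)(i := g a)"
    by auto
  ultimately have "holds A \<phi> ((g \<circ> v)(i := g a))"
    by simp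
  moreover have "g a \<in> A"
    using a PEx.prems(2) by (auto simp: End_def)
  ultimately show ?case
    unfolding holds.simps by blast
qed auto

lemma pos_def_subset_Inv_End: "pos_def A Q \<subseteq> Inv A (End A Q)"
proof
  fix R assume "R \<in> pos_def A Q"
  then obtain \<phi> ys where R: "R = (length ys, {map v ys | v. (\<forall>i. v i \<in> A) \<and> holds A \<phi> v})"
    and "ys \<noteq> []" and \<phi>: "pform_over Q \<phi>"
    by (auto simp: pos_def_def)
  then have "R \<in> Rel A"
    by (auto simp: Rel_def tuples_def Suc_le_eq)
  moreover have "preserves_map g R" if "g \<in> End A Q" for g
    unfolding preserves_map_def
  proof
    fix r assume "r \<in> snd R"
    then obtain v where r: "r = map v ys" and v: "\<forall>i. v i \<in> A" "holds A \<phi> v"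
      by (auto simp: R)
    have "\<forall>i. (g \<circ> v) i \<in> A"
      using that v by (auto simp: End_def)
    moreover have "holds A \<phi> (g \<circ> v)"
      using holds_comp_End[OF \<phi> that v] .
    moreover have "map g r = map (g \<circ> v) ys"
      by (simp add: r)
    ultimately show "map g r \<in> snd R"
      unfolding R snd_conv mem_Collect_eq by blast
  qed
  ultimately show "R \<in> Inv A (End A Q)"
    by (simp add: Inv_def)
qed

definition PAnds :: "'r pform list \<Rightarrow> 'r pform" where
  "PAnds \<phi>s = foldr PAnd \<phi>s (PEq 0 0)"

definition POrs :: "'r pform list \<Rightarrow> 'r pform" where
  "POrs \<phi>s = foldr POr \<phi>s PFalse"

lemma holds_PAnds [simp]: "holds A (PAnds \<phi>s) v \<longleftrightarrow> (\<forall>\<phi>\<in>set \<phi>s. holds A \<phi> v)"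
  by (induction \<phi>s) (auto simp: PAnds_def)

lemma holds_POrs [simp]: "holds A (POrs \<phi>s) v \<longleftrightarrow> (\<exists>\<phi>\<in>set \<phi>s. holds A \<phi> v)"
  by (induction \<phi>s) (auto simp: POrs_def)

lemma pform_over_PAnds [simp]: "pform_over Q (PAnds \<phi>s) \<longleftrightarrow> (\<forall>\<phi>\<in>set \<phi>s. pform_over Q \<phi>)"
  by (induction \<phi>s) (auto simp: PAnds_def)

lemma pform_over_POrs [simp]: "pform_over Q (POrs \<phi>s) \<longleftrightarrow> (\<forall>\<phi>\<in>set \<phi>s. pform_over Q \<phi>)"
  by (induction \<phi>s) (auto simp: POrs_def)

lemma finite_relation_definable:
  fixes \<rho> :: "'a list set" and A :: "'a set" and Q :: "(nat \<times> 'a list set) set"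
  assumes "finite \<rho>" and "\<forall>r\<in>\<rho>. length r = length ys"
  shows "\<exists>\<Psi>. pform_over Q \<Psi> \<and> (\<forall>v. holds A \<Psi> v \<longleftrightarrow> (\<exists>r\<in>\<rho>. map v ys = map (v \<circ> \<iota>) r))"
proof -
  obtain rs where rs: "set rs = \<rho>"
    using finite_list[OF assms(1)] by blast
  define conj :: "'a list \<Rightarrow> (nat \<times> 'a list set) pform"
    where "conj r = PAnds (map (\<lambda>i. PEq (ys ! i) (\<iota> (r ! i))) [0..<length ys])" for r
  have "holds A (conj r) v \<longleftrightarrow> map v ys = map (v \<circ> \<iota>) r" if "length r = length ys" for r v
  proof -
    have "holds A (conj r) v \<longleftrightarrow> (\<forall>i<length ys. v (ys ! i) = v (\<iota> (r ! i)))"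
      by (auto simp: conj_def)
    also have "\<dots> \<longleftrightarrow> map v ys = map (v \<circ> \<iota>) r"
      using that by (simp add: list_eq_iff_nth_eq)
    finally show ?thesis .
  qed
  then have "holds A (POrs (map conj rs)) v \<longleftrightarrow> (\<exists>r\<in>\<rho>. map v ys = map (v \<circ> \<iota>) r)" for v
    using assms(2) rs by auto
  moreover have "pform_over Q (POrs (map conj rs))"
    by (simp add: conj_def)
  ultimately show ?thesis
    by blast
qed
lemma End_definable:
  fixes A :: "'a set" and Q :: "(nat \<times> 'a list set) set" and \<iota> :: "'a \<Rightarrow> nat"
  assumes "finite A" and Q: "Q \<subseteq> Rel A"
  shows "\<exists>\<Phi>. pform_over Q \<Phi> \<and>
    (\<forall>v. (\<forall>a\<in>A. v (\<iota> a) \<in> A) \<longrightarrow> (holds A \<Phi> v \<longleftrightarrow> restrict (v \<circ> \<iota>) A \<in> End A Q))"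
proof -
  define E where "E = (A \<rightarrow>\<^sub>E A) - End A Q"
  have "\<exists>R r. R \<in> Q \<and> r \<in> snd R \<and> map g r \<notin> snd R" if "g \<in> E" for g
    using that unfolding E_def End_def preserves_map_def by blast
  then obtain R r where R: "\<And>g. g \<in> E \<Longrightarrow> R g \<in> Q \<and> r g \<in> snd (R g) \<and> map g (r g) \<notin> snd (R g)"
    by metis
  have r_tuple: "set (r g) \<subseteq> A \<and> length (r g) = fst (R g)" if "g \<in> E" for g
    using R[OF that] Q Rel_tuple[of "fst (R g)" "snd (R g)" A "r g"] by auto
  obtain gs where gs: "set gs = E"
    using finite_list[of E] assms(1) by (auto simp: E_def intro: finite_PiE)
  define \<Phi> where "\<Phi> = PAnds (map (\<lambda>g. PAtom (R g) (map \<iota> (r g))) gs)"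
  have "pform_over Q \<Phi>"
    using R r_tuple by (auto simp: \<Phi>_def gs)
  moreover have "holds A \<Phi> v \<longleftrightarrow> restrict (v \<circ> \<iota>) A \<in> End A Q" if "\<forall>a\<in>A. v (\<iota> a) \<in> A" for v
  proof -
    have restrict_eq: "map (restrict (v \<circ> \<iota>) A) (r g) = map (v \<circ> \<iota>) (r g)" if "g \<in> E" for g
      using r_tuple[OF that] by auto
    have "holds A \<Phi> v \<longleftrightarrow> (\<forall>g\<in>E. map (v \<circ> \<iota>) (r g) \<in> snd (R g))"
      by (simp add: \<Phi>_def gs)
    also have "\<dots> \<longleftrightarrow> (\<forall>g\<in>E. map (restrict (v \<circ> \<iota>) A) (r g) \<in> snd (R g))"
      by (simp add: restrict_eq)
    finally have "holds A \<Phi> v \<longleftrightarrow> (\<forall>g\<in>E. map (restrict (v \<circ> \<iota>) A) (r g) \<in> snd (R g))" .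
    moreover have "(\<forall>g\<in>E. map h (r g) \<in> snd (R g)) \<longleftrightarrow> h \<in> End A Q"
      if "h \<in> A \<rightarrow>\<^sub>E A" for h
    proof
      assume "\<forall>g\<in>E. map h (r g) \<in> snd (R g)"
      then show "h \<in> End A Q"
        using R[of h] that by (auto simp: E_def)
    next
      assume "h \<in> End A Q"
      then show "\<forall>g\<in>E. map h (r g) \<in> snd (R g)"
        using R by (auto simp: End_def preserves_map_def)
    qed
    moreover have "restrict (v \<circ> \<iota>) A \<in> A \<rightarrow>\<^sub>E A"
      using that by auto
    ultimately show ?thesis
      by simp
  qed
  ultimately show ?thesis
    by blast
qed

lemma assignment_exists:
  assumes "\<iota> ` A = {i. i < n}" and "inj_on \<iota> A" and "set r \<subseteq> A" and "r \<noteq> []"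
  obtains v where "\<forall>i. v i \<in> A" and "\<forall>a\<in>A. v (\<iota> a) = a" and "map v [n..<n + length r] = r"
proof
  define v where "v p = (if p < n then inv_into A \<iota> p else if p < n + length r then r ! (p - n) else r ! 0)"
    for p
  show "\<forall>i. v i \<in> A"
    using assms by (auto simp: v_def intro!: inv_into_into)
  have "\<iota> a < n" if "a \<in> A" for a
    using assms(1) that by blast
  then show "\<forall>a\<in>A. v (\<iota> a) = a"
    using assms(2) by (simp add: v_def)
  show "map v [n..<n + length r] = r"
    by (auto intro!: nth_equalityI simp: v_def)
qed

text \<open>Variable \<open>\<iota> a\<close> stands for the element \<open>a\<close> and \<open>ys\<close> are further variables: \<open>\<Phi>\<close> says
  that \<open>a \<mapsto> v (\<iota> a)\<close> is an endomorphism and \<open>\<Psi>\<close> that the values of \<open>ys\<close> are the image of a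
  tuple of \<open>\<rho>\<close> under this map, so the defined relation consists of the images of \<open>\<rho>\<close> under
  \<open>End Q\<close>.\<close>

lemma Inv_End_defined:
  assumes R: "(m, \<rho>) \<in> Inv A (End A Q)" and Q: "Q \<subseteq> Rel A"
    and \<iota>: "\<iota> ` A = {i. i < n}" "inj_on \<iota> A"
    and \<Phi>: "\<And>v. \<forall>a\<in>A. v (\<iota> a) \<in> A \<Longrightarrow> holds A \<Phi> v \<longleftrightarrow> restrict (v \<circ> \<iota>) A \<in> End A Q"
    and \<Psi>: "\<And>v. holds A \<Psi> v \<longleftrightarrow> (\<exists>r\<in>\<rho>. map v ys = map (v \<circ> \<iota>) r)"
    and ys: "ys = [n..<n + m]"
  shows "\<rho> = {map v ys | v. (\<forall>i. v i \<in> A) \<and> holds A (PAnd \<Phi> \<Psi>) v}"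
proof (intro subset_antisym subsetI)
  have \<rho>: "\<rho> \<subseteq> tuples A m" "1 \<le> m"
    using R by (auto simp: Inv_def Rel_def)
  fix r assume "r \<in> \<rho>"
  then have r: "set r \<subseteq> A" "length r = m" "r \<noteq> []"
    using \<rho> by (auto simp: tuples_def)
  obtain v where v: "\<forall>i. v i \<in> A" "\<forall>a\<in>A. v (\<iota> a) = a" "map v [n..<n + length r] = r"
    using assignment_exists[OF \<iota> r(1,3)] by blast
  then have "restrict (v \<circ> \<iota>) A = restrict id A"
    by auto
  then have "holds A \<Phi> v"
    using \<Phi> v(2) monoid_End[OF Q] by (simp add: monoid_on_def)
  moreover have "map (v \<circ> \<iota>) r = r"
    using r v(2) by (auto intro!: map_idI)
  then have "map v ys = map (v \<circ> \<iota>) r"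
    using v(3) r(2) ys by simp
  then have "holds A \<Psi> v"
    using \<Psi> \<open>r \<in> \<rho>\<close> by blast
  ultimately show "r \<in> {map v ys | v. (\<forall>i. v i \<in> A) \<and> holds A (PAnd \<Phi> \<Psi>) v}"
    using v(1,3) r(2) ys by auto
next
  fix t assume "t \<in> {map v ys | v. (\<forall>i. v i \<in> A) \<and> holds A (PAnd \<Phi> \<Psi>) v}"
  then obtain v where t: "t = map v ys" and v: "\<forall>i. v i \<in> A" "holds A \<Phi> v" "holds A \<Psi> v"
    by auto
  then have "restrict (v \<circ> \<iota>) A \<in> End A Q"
    using \<Phi> by simp
  moreover obtain r where "r \<in> \<rho>" "t = map (v \<circ> \<iota>) r"
    using \<Psi> v(3) t by blast
  moreover have "map (v \<circ> \<iota>) r = map (restrict (v \<circ> \<iota>) A) r" if "r \<in> \<rho>" for r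
    using that R by (auto simp: Inv_def Rel_def tuples_def)
  ultimately show "t \<in> \<rho>"
    using R by (auto simp: Inv_def preserves_map_def)
qed

lemma Inv_End_subset_pos_def:
  assumes "finite A" and Q: "Q \<subseteq> Rel A"
  shows "Inv A (End A Q) \<subseteq> pos_def A Q"
proof
  fix R assume R: "R \<in> Inv A (End A Q)"
  obtain m \<rho> where m\<rho>: "R = (m, \<rho>)"
    by fastforce
  have "1 \<le> m" and \<rho>: "\<rho> \<subseteq> tuples A m"
    using R by (auto simp: m\<rho> Inv_def Rel_def)
  obtain \<iota> and n :: nat where \<iota>: "\<iota> ` A = {i. i < n}" "inj_on \<iota> A"
    using finite_imp_inj_to_nat_seg[OF assms(1)] by blast
  define ys where "ys = [n..<n + m]"
  obtain \<Phi> where \<Phi>: "pform_over Q \<Phi>"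
    "\<And>v. \<forall>a\<in>A. v (\<iota> a) \<in> A \<Longrightarrow> holds A \<Phi> v \<longleftrightarrow> restrict (v \<circ> \<iota>) A \<in> End A Q"
    using End_definable[OF assms, of \<iota>] by blast
  have "finite \<rho>"
    using \<rho> finite_lists_length_eq[OF assms(1), of m] by (auto simp: tuples_def intro: finite_subset)
  moreover have "\<forall>r\<in>\<rho>. length r = length ys"
    using \<rho> by (auto simp: tuples_def ys_def)
  ultimately obtain \<Psi> where \<Psi>: "pform_over Q \<Psi>"
    "\<And>v. holds A \<Psi> v \<longleftrightarrow> (\<exists>r\<in>\<rho>. map v ys = map (v \<circ> \<iota>) r)"
    using finite_relation_definable by blast
  have "\<rho> = {map v ys | v. (\<forall>i. v i \<in> A) \<and> holds A (PAnd \<Phi> \<Psi>) v}"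
    using Inv_End_defined[OF R[unfolded m\<rho>] Q \<iota> \<Phi>(2) \<Psi>(2) ys_def] .
  moreover have "ys \<noteq> []" "length ys = m" "pform_over Q (PAnd \<Phi> \<Psi>)"
    using \<open>1 \<le> m\<close> \<Phi>(1) \<Psi>(1) by (auto simp: ys_def)
  ultimately show "R \<in> pos_def A Q"
    unfolding pos_def_def m\<rho> by blast
qed

lemma pos_def_eq_Inv_End:
  "finite A \<Longrightarrow> Q \<subseteq> Rel A \<Longrightarrow> pos_def A Q = Inv A (End A Q)"
  using pos_def_subset_Inv_End Inv_End_subset_pos_def by blast

lemma pos_def_eq_iff_End_eq:
  assumes "finite A" and "Q \<subseteq> Rel A" and "Q' \<subseteq> Rel A"
  shows "pos_def A Q = pos_def A Q' \<longleftrightarrow> End A Q = End A Q'"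
  using assms pos_def_eq_Inv_End End_Inv_End by metis

theorem corollary4p3:
  fixes A :: "'a set" and as :: "'a list"
  assumes "finite A" and "A \<noteq> {}"
    and "distinct as" and "set as = A"
  shows
  "(\<forall>M. M \<subseteq> A \<rightarrow>\<^sub>E A \<longrightarrow> star A (ubar A M) = Pol A (gQuordM A M))
   \<and>
   (\<forall>M. monoid_on A M \<longrightarrow>
      (u_closed A M \<longleftrightarrow> clone A (star A M))
    \<and> (u_closed A M \<longleftrightarrow> Gamma as M \<in> gQuord A)
    \<and> (u_closed A M \<longleftrightarrow> (\<exists>Q \<subseteq> gQuord A. M = End A Q))
    \<and> (u_closed A M \<longleftrightarrow> (\<exists>Q \<subseteq> gQuord A. star A M = Pol A Q))
    \<and> (u_closed A M \<longleftrightarrow> (\<exists>Q \<subseteq> gQuord A. M = End A Q \<and> star A M = Pol A Q)))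
   \<and>
   (\<forall>Q. Q \<subseteq> Rel A \<longrightarrow>
      (u_closed A (End A Q) \<longleftrightarrow> clone A (star A (End A Q)))
    \<and> (u_closed A (End A Q) \<longleftrightarrow> Gamma as (End A Q) \<in> gQuord A)
    \<and> (u_closed A (End A Q) \<longleftrightarrow> (\<exists>Q' \<subseteq> gQuord A. End A Q = End A Q'))
    \<and> (u_closed A (End A Q) \<longleftrightarrow> (\<exists>Q' \<subseteq> gQuord A. pos_def A Q = pos_def A Q'))
    \<and> (u_closed A (End A Q) \<longleftrightarrow> (\<exists>Q' \<subseteq> gQuord A. star A (End A Q) = Pol A Q'))
    \<and> (u_closed A (End A Q) \<longleftrightarrow>
         (\<exists>Q' \<subseteq> gQuord A. End A Q = End A Q' \<and> star A (End A Q) = Pol A Q'))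
    \<and> (u_closed A (End A Q) \<longleftrightarrow> (\<exists>\<rho> \<in> gQuord A. End A Q = End A {\<rho>}))
    \<and> (u_closed A (End A Q) \<longleftrightarrow> (\<exists>\<rho> \<in> gQuord A. pos_def A Q = pos_def A {\<rho>}))
    \<and> (u_closed A (End A Q) \<longleftrightarrow> (\<exists>\<rho> \<in> gQuord A. star A (End A Q) = Pol A {\<rho>}))
    \<and> (u_closed A (End A Q) \<longleftrightarrow>
         (\<exists>\<rho> \<in> gQuord A. End A Q = End A {\<rho>} \<and> star A (End A Q) = Pol A {\<rho>})))"
proof -
  have pos_def: "pos_def A Q = pos_def A Q' \<longleftrightarrow> End A Q = End A Q'"
    if "Q \<subseteq> Rel A" "Q' \<subseteq> gQuord A" for Q Q'
    using pos_def_eq_iff_End_eq[OF assms(1) that(1)] that(2) gQuord_subset_Rel by blast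
  note b = u_closed_monoid_iff[OF assms(2-4)]
  note c = u_closed_monoid_iff[OF assms(2-4) monoid_End]
  show ?thesis
    by (intro conjI allI impI)
      (use star_ubar[OF assms(1,2)] b c pos_def in \<open>metis empty_subsetI insert_subset\<close>)+
qed

end
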